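(* Let $n,t\in\mathbb N$. If $\mathcal H$ is an $n$-vertex intersecting hypergraph with codegree at most $t$ and no edge of size one, then $e(\mathcal H)\leq t\max_{v\in V(\mathcal H)}|N[v]|$. Moreover, if equality holds, then there exists $v\in V(\mathcal H)$ such that $e(\mathcal H)=t|N[v]|$, $d(x)=0$ for every $x\in V(\mathcal H)\setminus N[v]$, and $\mathcal H[N[v]]$ is either a $t$-fold projective plane of order $k$ for some $k\in\mathbb N$ (so that $|N[v]|=k^2+k+1$), or a $t$-fold near-pencil.
   Context: A hypergraph $\mathcal H$ consists of a finite vertex set $V(\mathcal H)$ and a finite set of edges, each edge $e$ equipped with a nonempty set $V(e)\subseteq V(\mathcal H)$; multiple edges with the same vertex set are allowed. The size of $e$ is $|V(e)|$, and $e(\mathcal H)$ is the number of edges. $d(x)$ is the number of edges containing $x$. The codegree of distinct vertices $u,v$ is the number of edges containing both; the codegree of $\mathcal H$ is the maximum of these. $\mathcal H$ is intersecting if $V(e)\cap V(f)\neq\emptyset$ for all edges $e,f$, and linear if its codegree is at most one. For $v\in V(\mathcal H)$, $N[v]=\bigcup_{e\in\mathcal H: v\in V(e)}V(e)$. For $S\subseteq V(\mathcal H)$, $\mathcal H[S]$ is the hypergraph with vertex set $S$ and edge set $\{e\in\mathcal H: V(e)\subseteq S\}$. A projective plane of order $k$ is a linear intersecting hypergraph with $k^2+k+1$ vertices in which every edge has size $k+1$ and every vertex lies in exactly $k+1$ edges. A near-pencil on $m$ vertices is a hypergraph isomorphic to the one with vertex set $\{v,v_1,\dots,v_{m-1}\}$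 and edges $e,e_1,\dots,e_{m-1}$ where $V(e)=\{v_1,\dots,v_{m-1}\}$ and $V(e_i)=\{v,v_i\}$. A $t$-fold $\mathcal H$ is obtained from $\mathcal H$ by replacing each edge with $t$ distinct edges having the same vertex set. *)

theory Defs
  imports Main "HOL-Library.Multiset"
begin

definition hypergraph :: "'a set \<Rightarrow> 'a set multiset \<Rightarrow> bool" where
  "hypergraph V E \<longleftrightarrow> finite V \<and> (\<forall>e\<in>#E. e \<noteq> {} \<and> e \<subseteq> V)"

definition degree :: "'a set multiset \<Rightarrow> 'a \<Rightarrow> nat" where
  "degree E x = size (filter_mset (\<lambda>e. x \<in> e) E)"

definition codegree_le :: "'a set multiset \<Rightarrow> nat \<Rightarrow> bool" where
  "codegree_le E t \<longleftrightarrow> (\<forall>u v. u \<noteq> v \<longrightarrow> size (filter_mset (\<lambda>e. u \<in> e \<and> v \<in> e) E) \<le> t)"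

definition intersecting :: "'a set multiset \<Rightarrow> bool" where
  "intersecting E \<longleftrightarrow> (\<forall>e\<in>#E. \<forall>f\<in>#E. e \<inter> f \<noteq> {})"

definition linear :: "'a set multiset \<Rightarrow> bool" where
  "linear E \<longleftrightarrow> codegree_le E 1"

definition closed_nbhd :: "'a set multiset \<Rightarrow> 'a \<Rightarrow> 'a set" where
  "closed_nbhd E v = \<Union>{e. e \<in># E \<and> v \<in> e}"

text \<open>Edge multiset of the induced subhypergraph H[S] (its vertex set is S).\<close>
definition induced :: "'a set multiset \<Rightarrow> 'a set \<Rightarrow> 'a set multiset" where
  "induced E S = filter_mset (\<lambda>e. e \<subseteq> S) E"

definition projective_plane :: "'a set \<Rightarrow> 'a set multiset \<Rightarrow> nat \<Rightarrow> bool" where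
  "projective_plane V E k \<longleftrightarrow> hypergraph V E \<and> linear E \<and> intersecting E \<and>
     card V = k^2 + k + 1 \<and> (\<forall>e\<in>#E. card e = k + 1) \<and> (\<forall>x\<in>V. degree E x = k + 1)"

definition near_pencil :: "'a set \<Rightarrow> 'a set multiset \<Rightarrow> nat \<Rightarrow> bool" where
  "near_pencil V E m \<longleftrightarrow> hypergraph V E \<and> card V = m \<and>
     (\<exists>v vs. V = insert v vs \<and> v \<notin> vs \<and>
        E = add_mset vs (image_mset (\<lambda>u. {v, u}) (mset_set vs)))"

definition t_fold :: "nat \<Rightarrow> 'a set multiset \<Rightarrow> 'a set multiset" where
  "t_fold t P = repeat_mset t P"

end

(*
  Let m = e(H), let x be a vertex of maximum degree and L = N[x].  If some vertex z lies on
  every edge, each edge through z contains another vertex of N[z], and each such vertex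
  shares at most t edges with z, so m <= t (|N[z]| - 1).  Otherwise every edge meets L, and
  counting the edges through y by their (nonempty) traces on an edge e missing y gives
  d(y) <= t |e \<inter> N[y]|; hence d(y) <= t |e \<inter> L| for y in L (directly if x is in e,
  through d(y) <= d(x) otherwise).  If m >= t |L|, this compares the de Bruijn-Erdos weights
  1 / (|L| (m - d(y))) <= 1 / (m (|L| - |e \<inter> L|)) over the non-incident pairs (y, e);
  the first family sums to 1 and the second to at most 1, so every comparison is an
  equality, which is impossible for y = x when m > t |L|.

  When m = t |L| and |L| is the largest closed neighbourhood, the same tightness puts every
  edge inside L, gives every edge multiplicity t and makes any two distinct edges meet in
  exactly one vertex.  The underlying simple hypergraph is then a linear space on L with as
  many lines as points, i.e. a projective plane or a near-pencil.
*)

theory Submission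
  imports Defs Complex_Main
begin

section \<open>Counting in multisets\<close>

lemma two_le_card_iff: "2 \<le> card A \<longleftrightarrow> finite A \<and> (\<exists>a\<in>A. \<exists>b\<in>A. a \<noteq> b)"
  using card_le_Suc0_iff_eq[of A] by (cases "finite A") auto

lemma sum_mset_if_const:
  "(\<Sum>x\<in>#M. if P x then c else 0) = of_nat (size {#x \<in># M. P x#}) * (c :: 'b :: semiring_1)"
  by (induction M) (simp_all add: algebra_simps)

lemma sum_mset_filter_mset:
  "(\<Sum>x\<in>#{#x \<in># M. P x#}. f x) = (\<Sum>x\<in>#M. if P x then f x else 0)"
  by (induction M) simp_all

lemma sum_mset_strict_mono_ex1:
  fixes f g :: "'a \<Rightarrow> 'b :: ordered_cancel_comm_monoid_add"
  assumes "\<And>x. x \<in># M \<Longrightarrow> f x \<le> g x" and "a \<in># M" and "f a < g a"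
  shows "(\<Sum>x\<in>#M. f x) < (\<Sum>x\<in>#M. g x)"
proof -
  obtain M' where M: "M = add_mset a M'"
    using assms(2) by (metis multi_member_split)
  then have "(\<Sum>x\<in>#M'. f x) \<le> (\<Sum>x\<in>#M'. g x)"
    using assms(1) by (intro sum_mset_mono) simp
  then show ?thesis
    using M assms(3) by (simp add: add_less_le_mono)
qed

lemma sum_mset_mono_eq:
  fixes f g :: "'a \<Rightarrow> 'b :: ordered_cancel_comm_monoid_add"
  assumes "\<And>x. x \<in># M \<Longrightarrow> f x \<le> g x" and "(\<Sum>x\<in>#M. g x) \<le> (\<Sum>x\<in>#M. f x)" and "a \<in># M"
  shows "f a = g a"
  using sum_mset_strict_mono_ex1[of M f g a] assms by (meson order.not_eq_order_implies_strict leD)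

lemma sum_mono_eq:
  fixes f g :: "'a \<Rightarrow> 'b :: ordered_cancel_comm_monoid_add"
  assumes "finite A" and "\<And>x. x \<in> A \<Longrightarrow> f x \<le> g x" and "(\<Sum>x\<in>A. g x) \<le> (\<Sum>x\<in>A. f x)" and "a \<in> A"
  shows "f a = g a"
  using sum_strict_mono_ex1[of A f g] assms by (meson order.not_eq_order_implies_strict leD)

lemma sum_size_filter_mset:
  assumes "finite U"
  shows "(\<Sum>u\<in>U. size {#x \<in># M. Q u x#}) = (\<Sum>x\<in>#M. card {u \<in> U. Q u x})"
proof (induction M)
  case (add a M)
  have "(\<Sum>u\<in>U. if Q u a then 1 else 0) = card {u \<in> U. Q u a}"
    using assms by (simp add: sum.If_cases Int_def conj_commute)
  moreover have "(\<Sum>u\<in>U. size {#x \<in># add_mset a M. Q u x#})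
      = (\<Sum>u\<in>U. (if Q u a then 1 else 0) + size {#x \<in># M. Q u x#})"
    by (rule sum.cong) simp_all
  ultimately show ?case
    using add by (simp add: sum.distrib)
qed simp

lemma size_filter_mset_le_sum:
  assumes "finite U" and "\<And>x. x \<in># M \<Longrightarrow> P x \<Longrightarrow> \<exists>u\<in>U. Q u x"
  shows "size {#x \<in># M. P x#} \<le> (\<Sum>u\<in>U. size {#x \<in># M. Q u x#})"
proof -
  have "size {#x \<in># M. P x#} = (\<Sum>x\<in>#M. if P x then 1 else 0)"
    by (simp add: sum_mset_if_const)
  also have "\<dots> \<le> (\<Sum>x\<in>#M. card {u \<in> U. Q u x})"
  proof (rule sum_mset_mono)
    fix x assume "x \<in># M"
    then show "(if P x then 1 else 0) \<le> card {u \<in> U. Q u x}"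
      using assms by (auto simp: Suc_le_eq card_gt_0_iff)
  qed
  finally show ?thesis
    using sum_size_filter_mset[OF assms(1), where Q = Q and M = M] by simp
qed

section \<open>Degrees and codegrees\<close>

definition codegree :: "'a set multiset \<Rightarrow> 'a \<Rightarrow> 'a \<Rightarrow> nat" where
  "codegree E u v = size {#e \<in># E. u \<in> e \<and> v \<in> e#}"

lemma codegree_le_iff: "codegree_le E t \<longleftrightarrow> (\<forall>u v. u \<noteq> v \<longrightarrow> codegree E u v \<le> t)"
  unfolding codegree_le_def codegree_def ..

lemma mem_closed_nbhd_iff: "u \<in> closed_nbhd E z \<longleftrightarrow> (\<exists>e. e \<in># E \<and> z \<in> e \<and> u \<in> e)"
  unfolding closed_nbhd_def by auto

lemma mem_closed_nbhdI: "e \<in># E \<Longrightarrow> z \<in> e \<Longrightarrow> u \<in> e \<Longrightarrow> u \<in> closed_nbhd E z"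
  unfolding mem_closed_nbhd_iff by blast

lemma edge_subset_closed_nbhd: "e \<in># E \<Longrightarrow> z \<in> e \<Longrightarrow> e \<subseteq> closed_nbhd E z"
  unfolding closed_nbhd_def by auto

lemma codegree_pos_iff: "0 < codegree E z u \<longleftrightarrow> u \<in> closed_nbhd E z"
  unfolding codegree_def mem_closed_nbhd_iff by (auto simp: nonempty_has_size[symmetric])

lemma degree_pos_iff: "0 < degree E z \<longleftrightarrow> (\<exists>e. e \<in># E \<and> z \<in> e)"
  unfolding degree_def by (auto simp: nonempty_has_size[symmetric])

lemma degree_repeat_mset: "degree (repeat_mset n E) z = n * degree E z"
proof -
  have "{#e \<in># repeat_mset n E. z \<in> e#} = repeat_mset n {#e \<in># E. z \<in> e#}"
    by (rule multiset_eqI) simp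
  then show ?thesis
    unfolding degree_def by simp
qed

lemma degree_mset_set: "finite S \<Longrightarrow> degree (mset_set S) z = card {e \<in> S. z \<in> e}"
  unfolding degree_def by simp

lemma degree_le_size: "degree E z \<le> size E"
  unfolding degree_def by simp

lemma degree_less_size_iff: "degree E z < size E \<longleftrightarrow> (\<exists>e. e \<in># E \<and> z \<notin> e)"
proof
  assume "degree E z < size E"
  then have "{#e \<in># E. z \<in> e#} \<noteq> {#e \<in># E. True#}"
    unfolding degree_def by auto
  then show "\<exists>e. e \<in># E \<and> z \<notin> e"
    by (metis filter_mset_cong0)
qed (auto simp: degree_def intro: size_filter_unsat_elem)

lemma sum_codegree_eq_sum_card_Int:
  assumes "finite A"
  shows "(\<Sum>u\<in>A. codegree E z u) = (\<Sum>g\<in>#{#g \<in># E. z \<in> g#}. card (A \<inter> g))"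
proof -
  have "(\<Sum>u\<in>A. codegree E z u) = (\<Sum>g\<in>#E. card {u \<in> A. z \<in> g \<and> u \<in> g})"
    unfolding codegree_def by (rule sum_size_filter_mset[OF assms])
  also have "\<dots> = (\<Sum>g\<in>#E. if z \<in> g then card (A \<inter> g) else 0)"
    by (rule arg_cong[where f = sum_mset], rule image_mset_cong) (auto simp: Int_def)
  finally show ?thesis
    by (simp add: sum_mset_filter_mset)
qed

lemma degree_le_sum_codegree:
  assumes "intersecting E" and "e \<in># E" and "finite e"
  shows "degree E z \<le> (\<Sum>u\<in>e. codegree E z u)"
proof -
  have "degree E z = (\<Sum>g\<in>#{#g \<in># E. z \<in> g#}. 1)"
    unfolding degree_def by simp
  also have "\<dots> \<le> (\<Sum>g\<in>#{#g \<in># E. z \<in> g#}. card (e \<inter> g))"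
    using assms by (intro sum_mset_mono) (auto simp: intersecting_def Suc_le_eq card_gt_0_iff)
  finally show ?thesis
    using sum_codegree_eq_sum_card_Int[OF assms(3)] by simp
qed

lemma sum_codegree_le:
  assumes "codegree_le E t" and "z \<notin> A" and "finite A"
  shows "(\<Sum>u\<in>A. codegree E z u) \<le> t * card (A \<inter> closed_nbhd E z)"
proof -
  have "(\<Sum>u\<in>A. codegree E z u) \<le> (\<Sum>u\<in>A. if u \<in> closed_nbhd E z then t else 0)"
  proof (rule sum_mono)
    fix u assume "u \<in> A"
    then have "u \<noteq> z"
      using assms(2) by blast
    then show "codegree E z u \<le> (if u \<in> closed_nbhd E z then t else 0)"
      using assms(1) codegree_pos_iff[of E z u] by (auto simp: codegree_le_iff)
  qed
  also have "\<dots> = t * card (A \<inter> closed_nbhd E z)"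
    using assms(3) by (simp add: sum.If_cases)
  finally show ?thesis .
qed

lemma degree_le_codegree_card:
  assumes "intersecting E" "codegree_le E t" "e \<in># E" "finite e" "z \<notin> e"
  shows "degree E z \<le> t * card (e \<inter> closed_nbhd E z)"
  using degree_le_sum_codegree[OF assms(1,3,4), of z] sum_codegree_le[OF assms(2,5,4)] by linarith

lemma
  assumes "intersecting E" "codegree_le E t" "e \<in># E" "finite e" "z \<notin> e"
    and tight: "t * card e \<le> degree E z"
  shows codegree_eq_if_degree_tight: "u \<in> e \<Longrightarrow> codegree E z u = t"
    and card_Int_eq_1_if_degree_tight: "g \<in># E \<Longrightarrow> z \<in> g \<Longrightarrow> card (e \<inter> g) = 1"
proof -
  have "t * card (e \<inter> closed_nbhd E z) \<le> t * card e"
    using assms(4) by (simp add: card_mono)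
  then have sum_eq: "(\<Sum>u\<in>e. codegree E z u) = t * card e" "degree E z = t * card e"
    using degree_le_sum_codegree[OF assms(1,3,4), of z] sum_codegree_le[OF assms(2,5,4)] tight
    by linarith+
  have "codegree E z u \<le> t" if "u \<in> e" for u
  proof -
    have "z \<noteq> u"
      using assms(5) that by blast
    then show ?thesis
      using assms(2) unfolding codegree_le_iff by blast
  qed
  then show "codegree E z u = t" if "u \<in> e"
    using sum_eq(1) that by (intro sum_mono_eq[OF assms(4), of "codegree E z" "\<lambda>_. t"]) auto
  show "card (e \<inter> g) = 1" if "g \<in># E" "z \<in> g"
  proof -
    have "(\<Sum>g\<in>#{#g \<in># E. z \<in> g#}. card (e \<inter> g)) \<le> (\<Sum>g\<in>#{#g \<in># E. z \<in> g#}. 1)"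
      using sum_eq sum_codegree_eq_sum_card_Int[OF assms(4), where z = z and E = E] by (simp add: degree_def)
    then show ?thesis
      using assms(1,3,4) that
      by (intro sym[OF sum_mset_mono_eq, of "{#g \<in># E. z \<in> g#}"])
         (auto simp: intersecting_def Suc_le_eq card_gt_0_iff)
  qed
qed

section \<open>The de Bruijn-Erdos weights\<close>

lemma size_filter_not_mem: "size {#e \<in># E. z \<notin> e#} = size E - degree E z"
  unfolding degree_def using multiset_partition[of E "\<lambda>e. z \<in> e"]
  by (metis add_diff_cancel_left' size_union)

lemma sum_sum_mset_swap: "(\<Sum>y\<in>A. \<Sum>x\<in>#M. f y x) = (\<Sum>x\<in>#M. \<Sum>y\<in>A. f y x)"
  by (induction M) (simp_all add: sum.distrib)

context
  fixes L :: "'a set" and E :: "'a set multiset"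
  assumes finite_L: "finite L" and L_ne: "L \<noteq> {}"
    and degree_less_size: "\<And>y. y \<in> L \<Longrightarrow> degree E y < size E"
begin

lemma sum_point_weights:
  "(\<Sum>y\<in>L. \<Sum>e\<in>#{#e \<in># E. y \<notin> e#}. inverse (card L * (size E - real (degree E y)))) = 1"
proof -
  have "(\<Sum>e\<in>#{#e \<in># E. y \<notin> e#}. inverse (card L * (size E - real (degree E y))))
      = inverse (card L)" if "y \<in> L" for y
    using degree_less_size[OF that] by (simp add: size_filter_not_mem of_nat_diff)
  then have "(\<Sum>y\<in>L. \<Sum>e\<in>#{#e \<in># E. y \<notin> e#}. inverse (card L * (size E - real (degree E y))))
      = (\<Sum>y\<in>L. inverse (card L))"
    by (rule sum.cong[OF refl])
  then show ?thesis
    using finite_L L_ne by simp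
qed

lemma sum_edge_weights:
  "(\<Sum>y\<in>L. \<Sum>e\<in>#{#e \<in># E. y \<notin> e#}. inverse (size E * (card L - real (card (e \<inter> L)))))
    = size {#e \<in># E. card (e \<inter> L) < card L#} / size E"
proof -
  have "card (L - e) * inverse (size E * (card L - real (card (e \<inter> L))))
      = (if card (e \<inter> L) < card L then inverse (size E) else 0)" for e
  proof -
    have "card (L - e) = card L - card (e \<inter> L)"
      using finite_L by (metis card_Diff_subset_Int finite_Int inf_commute)
    moreover have "card (e \<inter> L) \<le> card L"
      using finite_L by (simp add: card_mono)
    ultimately show ?thesis
      by (auto simp: of_nat_diff)
  qed
  moreover have "(\<Sum>y\<in>L. if y \<notin> e then c else 0) = card (L - e) * c" for e and c :: real
    using finite_L by (simp add: sum.If_cases Diff_eq Compl_eq)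
  ultimately have "(\<Sum>y\<in>L. \<Sum>e\<in>#{#e \<in># E. y \<notin> e#}. inverse (size E * (card L - real (card (e \<inter> L)))))
      = (\<Sum>e\<in>#E. if card (e \<inter> L) < card L then inverse (size E) else 0)"
    by (simp only: sum_mset_filter_mset sum_sum_mset_swap[where A = L])
  then show ?thesis
    by (simp add: sum_mset_if_const divide_inverse)
qed

lemma de_bruijn_erdos_equality:
  assumes le: "\<And>y e. y \<in> L \<Longrightarrow> e \<in># E \<Longrightarrow> y \<notin> e \<Longrightarrow> card L * degree E y \<le> size E * card (e \<inter> L)"
  shows "\<And>y e. y \<in> L \<Longrightarrow> e \<in># E \<Longrightarrow> y \<notin> e \<Longrightarrow> card L * degree E y = size E * card (e \<inter> L)"
    and "\<And>e. e \<in># E \<Longrightarrow> card (e \<inter> L) < card L"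
proof -
  define a where "a y = inverse (card L * (size E - real (degree E y)))" for y
  define b where "b e = inverse (size E * (card L - real (card (e \<inter> L))))" for e
  define A where "A y = (\<Sum>e\<in>#{#e \<in># E. y \<notin> e#}. a y)" for y
  define B where "B y = (\<Sum>e\<in>#{#e \<in># E. y \<notin> e#}. b e)" for y
  have weight_le: "a y \<le> b e" and weight_less: "card L * degree E y < size E * card (e \<inter> L) \<Longrightarrow> a y < b e"
    if "y \<in> L" "e \<in># E" "y \<notin> e" for y e
  proof -
    have "card (e \<inter> L) < card L"
      using finite_L that by (intro psubset_card_mono) auto
    then have pos: "0 < real (size E) * (card L - real (card (e \<inter> L)))"
      using degree_less_size[OF that(1)] by simp
    have "real (size E) * (card L - real (card (e \<inter> L))) \<le> card L * (size E - real (degree E y))"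
      using le[OF that] by (simp add: algebra_simps flip: of_nat_mult)
    then show "a y \<le> b e"
      unfolding a_def b_def using pos by (rule le_imp_inverse_le)
    assume "card L * degree E y < size E * card (e \<inter> L)"
    then have "real (size E) * (card L - real (card (e \<inter> L))) < card L * (size E - real (degree E y))"
      by (simp add: algebra_simps flip: of_nat_mult)
    then show "a y < b e"
      unfolding a_def b_def using pos by (rule less_imp_inverse_less)
  qed
  have AB: "A y \<le> B y" if "y \<in> L" for y
    unfolding A_def B_def using weight_le that by (intro sum_mset_mono) auto
  have sum_A: "(\<Sum>y\<in>L. A y) = 1"
    unfolding A_def a_def by (rule sum_point_weights)
  have sum_B: "(\<Sum>y\<in>L. B y) = size {#e \<in># E. card (e \<inter> L) < card L#} / size E"
    unfolding B_def b_def by (rule sum_edge_weights)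
  then have "(\<Sum>y\<in>L. B y) \<le> 1"
    by (auto simp: divide_le_eq_1 nonempty_has_size)
  then have sums_eq: "(\<Sum>y\<in>L. B y) \<le> (\<Sum>y\<in>L. A y)"
    using sum_A by simp
  show "card L * degree E y = size E * card (e \<inter> L)" if "y \<in> L" "e \<in># E" "y \<notin> e" for y e
  proof (rule ccontr)
    assume "card L * degree E y \<noteq> size E * card (e \<inter> L)"
    then have "a y < b e"
      using le[OF that] weight_less[OF that] by simp
    then have "A y < B y"
      unfolding A_def B_def using weight_le that by (intro sum_mset_strict_mono_ex1[of _ _ _ e]) auto
    then have "A y = B y" "A y \<noteq> B y"
      using sum_mono_eq[OF finite_L AB sums_eq that(1)] by simp_all
    then show False by simp
  qed
  show "card (e \<inter> L) < card L" if "e \<in># E" for e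
  proof (rule ccontr)
    assume "\<not> card (e \<inter> L) < card L"
    then have "size {#e \<in># E. card (e \<inter> L) < card L#} < size E"
      using that by (intro size_filter_unsat_elem)
    then have "(\<Sum>y\<in>L. B y) < 1"
      using sum_B by simp
    moreover have "(\<Sum>y\<in>L. A y) \<le> (\<Sum>y\<in>L. B y)"
      using AB by (intro sum_mono) auto
    ultimately show False
      using sum_A by simp
  qed
qed

end

section \<open>Linear spaces with as many lines as points\<close>

text \<open>The configurations of the equality case of the de Bruijn-Erdos theorem.\<close>

locale extremal_linear_space =
  fixes L :: "'a set" and S :: "'a set set"
  assumes finite_L: "finite L" and L_ne: "L \<noteq> {}"
    and line_subset: "e \<in> S \<Longrightarrow> e \<subseteq> L"
    and two_le_card_line: "e \<in> S \<Longrightarrow> 2 \<le> card e"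
    and card_line_less: "e \<in> S \<Longrightarrow> card e < card L"
    and card_Int_lines: "e \<in> S \<Longrightarrow> g \<in> S \<Longrightarrow> e \<noteq> g \<Longrightarrow> card (e \<inter> g) = 1"
    and points_joined: "y \<in> L \<Longrightarrow> u \<in> L \<Longrightarrow> y \<noteq> u \<Longrightarrow> \<exists>e\<in>S. y \<in> e \<and> u \<in> e"
    and card_lines: "card S = card L"
    and card_lines_through: "y \<in> L \<Longrightarrow> e \<in> S \<Longrightarrow> y \<notin> e \<Longrightarrow> card {g \<in> S. y \<in> g} = card e"
begin

lemma finite_S: "finite S"
  using finite_L line_subset by (intro finite_subset[of S "Pow L"]) auto

lemma finite_line: "e \<in> S \<Longrightarrow> finite e"
  using finite_L line_subset finite_subset by blast

lemma lines_Int_eq: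
  assumes "e \<in> S" "g \<in> S" "e \<noteq> g" "a \<in> e" "a \<in> g"
  shows "e \<inter> g = {a}"
  using card_Int_lines[OF assms(1-3)] assms(4,5) by (metis IntI card_1_singletonE singletonD)

lemma line_unique:
  assumes "e \<in> S" "g \<in> S" "a \<in> e" "a \<in> g" "b \<in> e" "b \<in> g" "a \<noteq> b"
  shows "e = g"
proof (rule ccontr)
  assume "e \<noteq> g"
  then have "e \<inter> g = {a}"
    using lines_Int_eq assms(1-4) by blast
  then show False
    using assms(5-7) by auto
qed

lemma near_pencil_if_card_line:
  assumes e: "e \<in> S" "card e + 1 = card L"
  obtains v where "L = insert v e" "v \<notin> e" "S = insert e ((\<lambda>u. {v, u}) ` e)"
proof -
  have "card (L - e) = 1"
    using e line_subset finite_line by (simp add: card_Diff_subset)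
  then obtain v where v: "L - e = {v}"
    by (metis card_1_singletonE)
  then have L: "L = insert v e" and "v \<notin> e"
    using line_subset[OF e(1)] by auto
  have other_line: "\<exists>u\<in>e. g = {v, u}" if g: "g \<in> S" "g \<noteq> e" for g
  proof -
    have card_eg: "card (e \<inter> g) = 1"
      using card_Int_lines[OF e(1) g(1)] g(2) by simp
    then obtain u where u: "e \<inter> g = {u}"
      by (metis card_1_singletonE)
    have "\<not> g \<subseteq> e"
    proof
      assume "g \<subseteq> e"
      then have "card g = 1"
        using card_eg by (simp add: Int_absorb1)
      then show False
        using two_le_card_line[OF g(1)] by simp
    qed
    then have "v \<in> g"
      using line_subset[OF g(1)] L by blast
    then have "g = {v, u}"
      using u line_subset[OF g(1)] L by blast
    then show ?thesis
      using u by blast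
  qed
  have "(\<lambda>u. {v, u}) ` e \<subseteq> S"
  proof
    fix g assume "g \<in> (\<lambda>u. {v, u}) ` e"
    then obtain u where u: "u \<in> e" "g = {v, u}" by blast
    then obtain h where h: "h \<in> S" "v \<in> h" "u \<in> h"
      using points_joined L \<open>v \<notin> e\<close> by (metis insertCI)
    then obtain u' where "u' \<in> e" "h = {v, u'}"
      using other_line \<open>v \<notin> e\<close> by metis
    then show "g \<in> S"
      using h u \<open>v \<notin> e\<close> by auto
  qed
  then have "S = insert e ((\<lambda>u. {v, u}) ` e)"
    using other_line e(1) by blast
  with L \<open>v \<notin> e\<close> show thesis by (rule that)
qed

lemma pair_line_if_covered:
  assumes "L \<subseteq> f \<union> g" "f \<in> S" "g \<in> S" "a \<in> f - g" "b \<in> g - f"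
  shows "{a, b} \<in> S"
proof -
  obtain h where h: "h \<in> S" "a \<in> h" "b \<in> h"
    using points_joined assms line_subset by (metis DiffD1 DiffD2 subsetD)
  have "h \<inter> f = {a}" "h \<inter> g = {b}"
    using lines_Int_eq[OF h(1)] assms(2-5) h by blast+
  moreover have "h \<subseteq> f \<union> g"
    using line_subset[OF h(1)] assms(1) by blast
  ultimately have "h = {a, b}"
    using h by blast
  then show ?thesis
    using h(1) by simp
qed

lemma two_le_card_Diff_line:
  assumes no_large: "\<forall>e\<in>S. card e + 1 \<noteq> card L"
    and "L \<subseteq> f \<union> g" "f \<in> S" "g \<in> S" "f \<noteq> g"
  shows "2 \<le> card (f - g)"
proof -
  have "card L \<le> card (f \<union> g)"
    using assms(2-4) finite_line by (simp add: card_mono)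
  also have "\<dots> = card f + card g - 1"
    using card_Un_Int[OF finite_line finite_line, OF assms(3,4)] card_Int_lines[OF assms(3-5)] by simp
  finally have "card L + 1 \<le> card f + card g"
    using two_le_card_line[OF assms(3)] by linarith
  moreover have "card g + 2 \<le> card L"
    using no_large card_line_less[OF assms(4)] assms(4) by fastforce
  moreover have "card (f - g) = card f - 1"
    using card_Diff_subset_Int[of f g] finite_line[OF assms(3)] card_Int_lines[OF assms(3-5)] by simp
  ultimately show ?thesis
    by linarith
qed

lemma exists_point_off_lines:
  assumes no_large: "\<forall>e\<in>S. card e + 1 \<noteq> card L" and "f \<in> S" "g \<in> S"
  shows "\<exists>y\<in>L. y \<notin> f \<and> y \<notin> g"
proof (rule ccontr)
  assume "\<not> ?thesis"
  then have cover: "L \<subseteq> f \<union> g"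
    by blast
  show False
  proof (cases "f = g")
    case True
    then have "card L \<le> card f"
      using cover by (intro card_mono[OF finite_line[OF assms(2)]]) simp
    then show False
      using card_line_less[OF assms(2)] by simp
  next
    case False
    obtain a a' where a: "a \<in> f - g" "a' \<in> f - g" "a \<noteq> a'"
      using two_le_card_Diff_line[OF no_large cover assms(2,3) False] by (auto simp: two_le_card_iff)
    obtain b b' where b: "b \<in> g - f" "b' \<in> g - f" "b \<noteq> b'"
      using two_le_card_Diff_line[OF no_large _ assms(3,2)] cover False
      by (auto simp: two_le_card_iff Un_commute)
    have "{a, b} \<in> S" "{a', b'} \<in> S"
      using pair_line_if_covered[OF cover assms(2,3)] a b by auto
    moreover have "{a, b} \<inter> {a', b'} = {}"
      using a b by auto
    ultimately show False
      using card_Int_lines a(3) by fastforce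
  qed
qed

lemma exists_line_avoiding:
  assumes "y \<in> L"
  shows "\<exists>e\<in>S. y \<notin> e"
proof (rule ccontr)
  assume "\<not> ?thesis"
  then have through_y: "\<forall>e\<in>S. y \<in> e"
    by blast
  have "\<exists>u. u \<in> e - {y}" if "e \<in> S" for e
    using two_le_card_line[OF that] by (auto simp: two_le_card_iff)
  then obtain \<phi> where \<phi>: "\<And>e. e \<in> S \<Longrightarrow> \<phi> e \<in> e - {y}"
    by metis
  have "inj_on \<phi> S"
    using \<phi> through_y line_unique by (intro inj_onI) (metis DiffE singletonI)
  moreover have "\<phi> ` S \<subseteq> L - {y}"
    using \<phi> line_subset by blast
  ultimately have "card S \<le> card (L - {y})"
    using finite_L by (intro card_inj_on_le) auto
  moreover have "0 < card L"
    using assms finite_L card_gt_0_iff by blast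
  ultimately show False
    using card_lines assms finite_L by simp
qed

lemma card_points_eq:
  assumes y: "y \<in> L" and K: "\<And>e. e \<in> S \<Longrightarrow> card e = K" "card {e \<in> S. y \<in> e} = K"
  shows "card L = K * (K - 1) + 1"
proof -
  define Sy where "Sy = {e \<in> S. y \<in> e}"
  have "L - {y} = (\<Union>e\<in>Sy. e - {y})"
    using points_joined[OF y] line_subset unfolding Sy_def by blast
  moreover have "(e - {y}) \<inter> (g - {y}) = {}" if "e \<in> Sy" "g \<in> Sy" "e \<noteq> g" for e g
    using lines_Int_eq[of e g y] that unfolding Sy_def by auto
  then have "card (\<Union>e\<in>Sy. e - {y}) = (\<Sum>e\<in>Sy. card (e - {y}))"
    using finite_S finite_line unfolding Sy_def by (intro card_UN_disjoint) auto
  moreover have "(\<Sum>e\<in>Sy. card (e - {y})) = K * (K - 1)"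
    using K finite_line unfolding Sy_def by simp
  ultimately have "card (L - {y}) = K * (K - 1)"
    by simp
  then show ?thesis
    using card.remove[OF finite_L y] by simp
qed

lemma projective_parameters:
  assumes no_large: "\<forall>e\<in>S. card e + 1 \<noteq> card L"
  obtains k where "card L = k\<^sup>2 + k + 1" "\<And>e. e \<in> S \<Longrightarrow> card e = k + 1"
    "\<And>y. y \<in> L \<Longrightarrow> card {e \<in> S. y \<in> e} = k + 1"
proof -
  obtain e0 where e0: "e0 \<in> S"
    using card_lines L_ne finite_L finite_S by (metis card_0_eq equals0I)
  define K where "K = card e0"
  have card_line: "card e = K" if e: "e \<in> S" for e
  proof -
    obtain y where y: "y \<in> L" "y \<notin> e" "y \<notin> e0"
      using exists_point_off_lines[OF no_large e e0] by blast
    show ?thesis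
      using card_lines_through[OF y(1) e y(2)] card_lines_through[OF y(1) e0 y(3)]
      unfolding K_def by simp
  qed
  have card_through: "card {e \<in> S. y \<in> e} = K" if y: "y \<in> L" for y
  proof -
    obtain f where "f \<in> S" "y \<notin> f"
      using exists_line_avoiding[OF y] by blast
    then show ?thesis
      using card_lines_through[OF y] card_line by simp
  qed
  obtain y where y: "y \<in> L"
    using L_ne by blast
  define k where "k = K - 1"
  have K: "K = k + 1"
    using two_le_card_line[OF e0] unfolding K_def k_def by simp
  have "card L = k\<^sup>2 + k + 1"
    using card_points_eq[OF y card_line card_through[OF y]] unfolding K
    by (simp add: power2_eq_square)
  then show thesis
    using that card_line card_through unfolding K by blast
qed

lemma hypergraph_lines: "hypergraph L (mset_set S)"
  unfolding hypergraph_def using finite_L finite_S line_subset two_le_card_line by fastforce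

lemma near_pencil_or_projective_plane:
  "near_pencil L (mset_set S) (card L) \<or> (\<exists>k. projective_plane L (mset_set S) k)"
proof (cases "\<exists>e\<in>S. card e + 1 = card L")
  case True
  then obtain e v where e: "e \<in> S" and v: "L = insert v e" "v \<notin> e" "S = insert e ((\<lambda>u. {v, u}) ` e)"
    by (metis near_pencil_if_card_line)
  have "e \<notin> (\<lambda>u. {v, u}) ` e"
    using v(2) by blast
  moreover have "inj_on (\<lambda>u. {v, u}) e"
    using v(2) by (intro inj_onI) (metis doubleton_eq_iff)
  ultimately have "mset_set S = add_mset e (image_mset (\<lambda>u. {v, u}) (mset_set e))"
    using v(3) finite_line[OF e] by (simp add: image_mset_mset_set)
  then have "near_pencil L (mset_set S) (card L)"
    unfolding near_pencil_def using hypergraph_lines v(1,2) by blast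
  then show ?thesis ..
next
  case False
  then obtain k where k: "card L = k\<^sup>2 + k + 1" "\<And>e. e \<in> S \<Longrightarrow> card e = k + 1"
    "\<And>y. y \<in> L \<Longrightarrow> card {e \<in> S. y \<in> e} = k + 1"
    using projective_parameters by blast
  have "Defs.linear (mset_set S)"
    unfolding Defs.linear_def codegree_le_def using finite_S line_unique
    by (auto simp: card_le_Suc0_iff_eq)
  moreover have "e \<inter> g \<noteq> {}" if "e \<in> S" "g \<in> S" for e g
    using card_Int_lines[OF that] two_le_card_line[OF that(1)] by (cases "e = g") auto
  then have "intersecting (mset_set S)"
    unfolding intersecting_def using finite_S by simp
  ultimately have "projective_plane L (mset_set S) k"
    unfolding projective_plane_def using hypergraph_lines k finite_S by (simp add: degree_mset_set finite_S)
  then show ?thesis by blast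
qed

end

section \<open>Intersecting hypergraphs of bounded codegree\<close>

locale intersecting_hypergraph =
  fixes V :: "'a set" and E :: "'a set multiset" and t :: nat
  assumes hypergraph_VE: "hypergraph V E"
    and intersecting_E: "intersecting E"
    and codegree_le_t: "codegree_le E t"
    and two_le_card_edge: "e \<in># E \<Longrightarrow> 2 \<le> card e"
begin

abbreviation max_card_closed_nbhd :: nat where
  "max_card_closed_nbhd \<equiv> Max ((\<lambda>v. card (closed_nbhd E v)) ` V)"

lemma finite_V: "finite V"
  using hypergraph_VE unfolding hypergraph_def by blast

lemma edge_subset_V: "e \<in># E \<Longrightarrow> e \<subseteq> V"
  using hypergraph_VE unfolding hypergraph_def by blast

lemma finite_edge: "e \<in># E \<Longrightarrow> finite e"
  using edge_subset_V finite_V finite_subset by blast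

lemma closed_nbhd_subset_V: "closed_nbhd E z \<subseteq> V"
  using edge_subset_V unfolding closed_nbhd_def by blast

lemma finite_closed_nbhd: "finite (closed_nbhd E z)"
  using closed_nbhd_subset_V finite_V finite_subset by blast

lemma edges_meet: "e \<in># E \<Longrightarrow> g \<in># E \<Longrightarrow> e \<inter> g \<noteq> {}"
  using intersecting_E unfolding intersecting_def by blast

lemma one_le_t:
  assumes "E \<noteq> {#}"
  shows "1 \<le> t"
proof -
  obtain e where e: "e \<in># E"
    using assms by blast
  then obtain a b where ab: "a \<in> e" "b \<in> e" "a \<noteq> b"
    using two_le_card_edge by (meson two_le_card_iff)
  then have "0 < codegree E a b"
    using mem_closed_nbhdI[OF e ab(1,2)] by (simp add: codegree_pos_iff)
  moreover have "codegree E a b \<le> t"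
    using codegree_le_t ab(3) by (simp add: codegree_le_iff)
  ultimately show ?thesis
    by simp
qed

lemma size_add_le_if_degree_eq_size:
  assumes "degree E z = size E" and "E \<noteq> {#}"
  shows "size E + t \<le> t * card (closed_nbhd E z)"
proof -
  define U where "U = closed_nbhd E z - {z}"
  obtain g where "g \<in># E" "z \<in> g"
    using assms degree_pos_iff[of E z] by (metis nonempty_has_size)
  then have "z \<in> closed_nbhd E z"
    by (intro mem_closed_nbhdI)
  then have card_U: "card (closed_nbhd E z) = card U + 1"
    unfolding U_def using card.remove[OF finite_closed_nbhd] by simp
  have "degree E z \<le> (\<Sum>u\<in>U. codegree E z u)"
    unfolding degree_def codegree_def
  proof (rule size_filter_mset_le_sum)
    show "finite U"
      unfolding U_def using finite_closed_nbhd by simp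
    fix g assume g: "g \<in># E" "z \<in> g"
    obtain u where u: "u \<in> g" "u \<noteq> z"
      using two_le_card_edge[OF g(1)] by (auto simp: two_le_card_iff)
    then have "u \<in> U"
      unfolding U_def using mem_closed_nbhdI[OF g u(1)] by blast
    then show "\<exists>u\<in>U. z \<in> g \<and> u \<in> g"
      using g(2) u(1) by blast
  qed
  also have "\<dots> \<le> t * card (U \<inter> closed_nbhd E z)"
    using codegree_le_t finite_closed_nbhd unfolding U_def by (intro sum_codegree_le) auto
  also have "U \<inter> closed_nbhd E z = U"
    unfolding U_def by blast
  finally show ?thesis
    using assms(1) card_U by simp
qed

lemma card_closed_nbhd_le_max: "v \<in> V \<Longrightarrow> card (closed_nbhd E v) \<le> max_card_closed_nbhd"
  using finite_V by simp

lemma size_less_if_degree_eq_size: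
  assumes "z \<in> V" "degree E z = size E" "E \<noteq> {#}"
  shows "size E < t * max_card_closed_nbhd"
proof -
  have "size E + t \<le> t * max_card_closed_nbhd"
    using size_add_le_if_degree_eq_size[OF assms(2,3)] card_closed_nbhd_le_max[OF assms(1)]
    by (meson le_trans mult_le_mono2)
  then show ?thesis
    using one_le_t[OF assms(3)] by simp
qed

end

lemma intersecting_hypergraphI:
  assumes "hypergraph V E" "intersecting E" "codegree_le E t" "\<forall>e\<in>#E. card e \<noteq> 1"
  shows "intersecting_hypergraph V E t"
proof
  fix e assume e: "e \<in># E"
  then have "finite e" "e \<noteq> {}"
    using assms(1) finite_subset unfolding hypergraph_def by blast+
  then have "card e \<noteq> 0"
    by simp
  moreover have "card e \<noteq> 1"
    using assms(4) e by blast
  ultimately show "2 \<le> card e"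
    by linarith
qed (use assms in auto)

locale max_degree_vertex = intersecting_hypergraph +
  fixes x :: 'a
  assumes x_in_V: "x \<in> V"
    and degree_le_max: "y \<in> V \<Longrightarrow> degree E y \<le> degree E x"
    and degree_less_size: "y \<in> V \<Longrightarrow> degree E y < size E"
begin

abbreviation Nx :: "'a set" where "Nx \<equiv> closed_nbhd E x"

lemma E_ne: "E \<noteq> {#}"
  using degree_less_size[OF x_in_V] by auto

lemma exists_edge_through_x: "\<exists>g. g \<in># E \<and> x \<in> g"
proof -
  obtain e where e: "e \<in># E"
    using E_ne by blast
  then obtain a where a: "a \<in> e"
    using two_le_card_edge[OF e] by (auto simp: two_le_card_iff)
  then have "0 < degree E a"
    unfolding degree_pos_iff using e by blast
  moreover have "degree E a \<le> degree E x"
    using a e edge_subset_V degree_le_max by blast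
  ultimately have "0 < degree E x"
    by linarith
  then show ?thesis
    unfolding degree_pos_iff .
qed

lemma x_in_Nx: "x \<in> Nx"
  using exists_edge_through_x unfolding mem_closed_nbhd_iff by blast

lemma edge_meets_Nx:
  assumes "e \<in># E"
  shows "e \<inter> Nx \<noteq> {}"
proof -
  obtain g where g: "g \<in># E" "x \<in> g"
    using exists_edge_through_x by blast
  then have "g \<subseteq> Nx"
    by (rule edge_subset_closed_nbhd)
  then show ?thesis
    using edges_meet[OF assms g(1)] by blast
qed

lemma degree_le_card_Int_Nx:
  assumes "y \<in> V" "e \<in># E" "y \<notin> e"
  shows "degree E y \<le> t * card (e \<inter> Nx)"
proof (cases "x \<in> e")
  case True
  have "degree E y \<le> t * card (e \<inter> closed_nbhd E y)"
    using assms intersecting_E codegree_le_t finite_edge by (intro degree_le_codegree_card)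
  also have "\<dots> \<le> t * card (e \<inter> Nx)"
    using edge_subset_closed_nbhd[OF assms(2) True] finite_edge[OF assms(2)]
    by (simp add: Int_absorb2 card_mono)
  finally show ?thesis .
next
  case False
  have "degree E y \<le> degree E x"
    using degree_le_max assms(1) .
  also have "\<dots> \<le> t * card (e \<inter> Nx)"
    using False assms intersecting_E codegree_le_t finite_edge by (intro degree_le_codegree_card)
  finally show ?thesis .
qed

lemma
  assumes "t * card Nx \<le> size E"
  shows card_Nx_mult_degree_eq: "\<And>y e. y \<in> Nx \<Longrightarrow> e \<in># E \<Longrightarrow> y \<notin> e \<Longrightarrow>
      card Nx * degree E y = size E * card (e \<inter> Nx)"
    and card_Int_Nx_less: "\<And>e. e \<in># E \<Longrightarrow> card (e \<inter> Nx) < card Nx"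
proof -
  have "card Nx * degree E y \<le> size E * card (e \<inter> Nx)"
    if "y \<in> Nx" "e \<in># E" "y \<notin> e" for y e
  proof -
    have "card Nx * degree E y \<le> card Nx * (t * card (e \<inter> Nx))"
      using degree_le_card_Int_Nx that closed_nbhd_subset_V by (simp add: subset_iff)
    also have "\<dots> \<le> size E * card (e \<inter> Nx)"
      using assms by (simp add: mult.assoc mult.left_commute)
    finally show ?thesis .
  qed
  moreover have "degree E y < size E" if "y \<in> Nx" for y
    using that closed_nbhd_subset_V degree_less_size by blast
  ultimately show "\<And>y e. y \<in> Nx \<Longrightarrow> e \<in># E \<Longrightarrow> y \<notin> e \<Longrightarrow>
      card Nx * degree E y = size E * card (e \<inter> Nx)"
    and "\<And>e. e \<in># E \<Longrightarrow> card (e \<inter> Nx) < card Nx"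
    using de_bruijn_erdos_equality[OF finite_closed_nbhd _] x_in_Nx by blast+
qed

lemma size_le_card_Nx: "size E \<le> t * card Nx"
proof (rule ccontr)
  assume "\<not> ?thesis"
  then have less: "t * card Nx < size E"
    by simp
  obtain e where e: "e \<in># E" "x \<notin> e"
    using degree_less_size[OF x_in_V] degree_less_size_iff by metis
  have "0 < card (e \<inter> Nx)"
    using edge_meets_Nx[OF e(1)] finite_closed_nbhd card_gt_0_iff by blast
  have "card Nx * degree E x \<le> card Nx * (t * card (e \<inter> Nx))"
    using degree_le_card_Int_Nx[OF x_in_V e] by simp
  also have "\<dots> = (t * card Nx) * card (e \<inter> Nx)"
    by simp
  also have "\<dots> < size E * card (e \<inter> Nx)"
    using less \<open>0 < card (e \<inter> Nx)\<close> by simp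
  finally show False
    using card_Nx_mult_degree_eq[OF less_imp_le[OF less] x_in_Nx e] by simp
qed

end

lemma (in intersecting_hypergraph) obtain_max_degree_vertex:
  assumes "E \<noteq> {#}" and no_full_degree: "\<forall>z\<in>V. degree E z \<noteq> size E"
  obtains x where "max_degree_vertex V E t x"
proof -
  obtain e where e: "e \<in># E"
    using assms(1) by blast
  then obtain a where "a \<in> e"
    using two_le_card_edge[OF e] by (auto simp: two_le_card_iff)
  then have "a \<in> V"
    using edge_subset_V e by blast
  have degree_less: "degree E y < size E" if "y \<in> V" for y
    using degree_le_size[of E y] no_full_degree that by (simp add: le_less)
  obtain x where "x \<in> V" "\<forall>y. y \<in> V \<longrightarrow> degree E y \<le> degree E x"
    using ex_has_greatest_nat[of "\<lambda>y. y \<in> V", OF \<open>a \<in> V\<close>] degree_less by blast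
  then have "max_degree_vertex V E t x"
    using degree_less by unfold_locales auto
  then show thesis
    by (rule that)
qed

locale extremal_configuration = max_degree_vertex +
  assumes size_eq: "size E = t * card (closed_nbhd E x)"
    and card_closed_nbhd_le: "v \<in> V \<Longrightarrow> card (closed_nbhd E v) \<le> card (closed_nbhd E x)"
begin

lemma degree_eq_card_Int:
  assumes "y \<in> Nx" "e \<in># E" "y \<notin> e"
  shows "degree E y = t * card (e \<inter> Nx)"
proof -
  have "card Nx * degree E y = size E * card (e \<inter> Nx)"
    using size_eq by (intro card_Nx_mult_degree_eq[OF _ assms]) simp
  then have "card Nx * degree E y = card Nx * (t * card (e \<inter> Nx))"
    by (simp only: size_eq ac_simps)
  moreover have "0 < card Nx"
    using x_in_Nx finite_closed_nbhd card_gt_0_iff by blast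
  ultimately show ?thesis
    by simp
qed

lemma codegree_eq_t:
  assumes "y \<in> Nx" "e \<in># E" "e \<subseteq> Nx" "y \<notin> e" "u \<in> e"
  shows "codegree E y u = t"
proof -
  have "degree E y = t * card e"
    using degree_eq_card_Int[OF assms(1,2,4)] assms(3) by (simp add: Int_absorb2)
  then show ?thesis
    using assms intersecting_E codegree_le_t finite_edge by (intro codegree_eq_if_degree_tight) auto
qed

lemma exists_edge_joining:
  assumes "y \<in> Nx" "e \<in># E" "e \<subseteq> Nx" "y \<notin> e" "u \<in> e"
  shows "\<exists>g. g \<in># E \<and> y \<in> g \<and> u \<in> g"
  using codegree_eq_t[OF assms] one_le_t[OF E_ne] codegree_pos_iff[of E y u]
  unfolding mem_closed_nbhd_iff by simp

lemma Nx_subset_closed_nbhd: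
  assumes "u \<in> Nx"
  shows "Nx \<subseteq> closed_nbhd E u"
proof
  fix y assume y: "y \<in> Nx"
  obtain e where e: "e \<in># E" "x \<in> e" "u \<in> e"
    using assms unfolding mem_closed_nbhd_iff by blast
  show "y \<in> closed_nbhd E u"
  proof (cases "y \<in> e")
    case True
    then show ?thesis
      by (rule mem_closed_nbhdI[OF e(1,3)])
  next
    case False
    then show ?thesis
      using exists_edge_joining[OF y e(1) edge_subset_closed_nbhd[OF e(1,2)] False e(3)]
      by (auto intro: mem_closed_nbhdI)
  qed
qed

text \<open>Maximality of the neighbourhood of \<open>x\<close> is used only here.\<close>

lemma edge_subset_Nx:
  assumes e: "e \<in># E"
  shows "e \<subseteq> Nx"
proof (rule ccontr)
  assume "\<not> e \<subseteq> Nx"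
  then obtain w where w: "w \<in> e" "w \<notin> Nx"
    by blast
  obtain u where u: "u \<in> e" "u \<in> Nx"
    using edge_meets_Nx[OF e] by blast
  have "w \<in> closed_nbhd E u"
    using e u(1) w(1) by (rule mem_closed_nbhdI)
  then have "insert w Nx \<subseteq> closed_nbhd E u"
    using Nx_subset_closed_nbhd[OF u(2)] by blast
  then have "card (insert w Nx) \<le> card (closed_nbhd E u)"
    by (rule card_mono[OF finite_closed_nbhd])
  then have "card Nx < card (closed_nbhd E u)"
    using w(2) finite_closed_nbhd by simp
  moreover have "card (closed_nbhd E u) \<le> card Nx"
    using card_closed_nbhd_le u(2) closed_nbhd_subset_V by blast
  ultimately show False
    by simp
qed

lemma card_edge_less:
  assumes "e \<in># E"
  shows "card e < card Nx"
  using card_Int_Nx_less[OF _ assms] edge_subset_Nx[OF assms] size_eq by (simp add: Int_absorb2)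

lemma card_Int_edges:
  assumes e: "e \<in># E" and g: "g \<in># E" and "e \<noteq> g"
  shows "card (e \<inter> g) = 1"
proof -
  have tight: "card (e' \<inter> g') = 1" if "e' \<in># E" "g' \<in># E" "z \<in> g'" "z \<notin> e'" for e' g' z
  proof -
    have "degree E z = t * card e'"
      using degree_eq_card_Int[of z e'] edge_subset_Nx that by (auto simp: Int_absorb2)
    then show ?thesis
      using that intersecting_E codegree_le_t finite_edge by (intro card_Int_eq_1_if_degree_tight) auto
  qed
  show ?thesis
  proof (cases "g \<subseteq> e")
    case True
    then obtain z where "z \<in> e" "z \<notin> g"
      using \<open>e \<noteq> g\<close> by blast
    then show ?thesis
      using tight[OF g e] by (simp add: Int_commute)
  next
    case False
    then show ?thesis
      using tight[OF e g] by blast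
  qed
qed

lemma edge_unique:
  assumes "e \<in># E" "g \<in># E" "u \<in> e" "u \<in> g" "w \<in> e" "w \<in> g" "u \<noteq> w"
  shows "e = g"
proof (rule ccontr)
  assume "e \<noteq> g"
  then have "card (e \<inter> g) = 1"
    using card_Int_edges assms(1,2) by blast
  moreover have "2 \<le> card (e \<inter> g)"
    using assms(3-7) finite_edge[OF assms(1)] by (auto simp: two_le_card_iff)
  ultimately show False
    by simp
qed

lemma count_edge:
  assumes e: "e \<in># E"
  shows "count E e = t"
proof -
  obtain u w where uw: "u \<in> e" "w \<in> e" "u \<noteq> w"
    using two_le_card_edge[OF e] by (meson two_le_card_iff)
  have "{#g \<in># E. u \<in> g \<and> w \<in> g#} = {#g \<in># E. g = e#}"
    using edge_unique[OF _ e _ uw(1) _ uw(2) uw(3)] uw by (intro filter_mset_cong0) blast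
  then have "codegree E w u = count E e"
    unfolding codegree_def by (simp add: filter_eq_replicate_mset conj_commute)
  have "\<not> Nx \<subseteq> e"
    using card_edge_less[OF e] card_mono[OF finite_edge[OF e]] by (meson leD)
  then obtain y where y: "y \<in> Nx" "y \<notin> e"
    by blast
  then obtain g where g: "g \<in># E" "y \<in> g" "u \<in> g"
    using exists_edge_joining[OF _ e edge_subset_Nx[OF e] _ uw(1)] by blast
  have "w \<notin> g"
    using edge_unique[OF e g(1) uw(1) g(3) uw(2) _ uw(3)] y(2) g(2) by blast
  then have "codegree E w u = t"
    using uw(2) e g edge_subset_Nx by (intro codegree_eq_t) auto
  with \<open>codegree E w u = count E e\<close> show ?thesis
    by simp
qed

lemma E_eq_t_fold: "E = t_fold t (mset_set (set_mset E))"
  unfolding t_fold_def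
proof (rule multiset_eqI)
  fix e
  show "count E e = count (repeat_mset t (mset_set (set_mset E))) e"
    by (cases "e \<in># E") (simp_all add: count_edge not_in_iff)
qed

lemma points_joined:
  assumes "y \<in> Nx" "u \<in> Nx" "y \<noteq> u"
  shows "\<exists>g\<in>set_mset E. y \<in> g \<and> u \<in> g"
proof (cases "\<exists>e. e \<in># E \<and> u \<in> e \<and> y \<notin> e")
  case True
  then obtain e where e: "e \<in># E" "u \<in> e" "y \<notin> e"
    by blast
  then show ?thesis
    using exists_edge_joining[OF assms(1) e(1) edge_subset_Nx[OF e(1)] e(3,2)] by auto
next
  case False
  obtain g where "g \<in># E" "x \<in> g" "u \<in> g"
    using assms(2) unfolding mem_closed_nbhd_iff by blast
  then show ?thesis
    using False by auto
qed

lemma extremal_linear_space: "extremal_linear_space Nx (set_mset E)"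
proof
  show "finite Nx" "Nx \<noteq> {}"
    using finite_closed_nbhd x_in_Nx by blast+
  have "0 < t"
    using one_le_t[OF E_ne] by simp
  then show "card (set_mset E) = card Nx"
    using arg_cong[OF E_eq_t_fold, of size] size_eq by (simp add: t_fold_def)
  have "degree E y = t * card {g \<in> set_mset E. y \<in> g}" for y
    by (subst E_eq_t_fold) (simp add: t_fold_def degree_repeat_mset degree_mset_set)
  then show "card {g \<in> set_mset E. y \<in> g} = card e"
    if "y \<in> Nx" "e \<in> set_mset E" "y \<notin> e" for y e
    using degree_eq_card_Int[of y e] edge_subset_Nx \<open>0 < t\<close> that by (simp add: Int_absorb2)
qed (use edge_subset_Nx two_le_card_edge card_edge_less card_Int_edges points_joined in auto)

lemma induced_Nx: "induced E Nx = E"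
proof -
  have "{#e \<in># E. e \<subseteq> Nx#} = {#e \<in># E. True#}"
    using edge_subset_Nx by (intro filter_mset_cong0) auto
  then show ?thesis
    unfolding induced_def by simp
qed

lemma extremal_structure:
  "\<exists>v\<in>V. size E = t * card (closed_nbhd E v)
     \<and> (\<forall>z\<in>V - closed_nbhd E v. degree E z = 0)
     \<and> ((\<exists>k P. projective_plane (closed_nbhd E v) P k
             \<and> induced E (closed_nbhd E v) = t_fold t P)
        \<or> (\<exists>P. near_pencil (closed_nbhd E v) P (card (closed_nbhd E v))
             \<and> induced E (closed_nbhd E v) = t_fold t P))"
proof -
  have "degree E z = 0" if "z \<notin> Nx" for z
    unfolding degree_def using edge_subset_Nx that by auto
  moreover have "near_pencil Nx (mset_set (set_mset E)) (card Nx)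
      \<or> (\<exists>k. projective_plane Nx (mset_set (set_mset E)) k)"
    by (rule extremal_linear_space.near_pencil_or_projective_plane[OF extremal_linear_space])
  ultimately show ?thesis
    using size_eq E_eq_t_fold by (intro bexI[OF _ x_in_V]) (simp add: induced_Nx, blast)
qed

end

lemma (in max_degree_vertex) size_le_max: "size E \<le> t * max_card_closed_nbhd"
  using size_le_card_Nx card_closed_nbhd_le_max[OF x_in_V] by (meson le_trans mult_le_mono2)

lemma (in max_degree_vertex) extremal_configurationI:
  assumes "size E = t * max_card_closed_nbhd"
  shows "extremal_configuration V E t x"
proof
  have "1 \<le> t"
    using one_le_t[OF E_ne] .
  then show "size E = t * card Nx"
    using assms size_le_card_Nx card_closed_nbhd_le_max[OF x_in_V] by simp
  then show "card (closed_nbhd E v) \<le> card Nx" if "v \<in> V" for v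
    using assms card_closed_nbhd_le_max[OF that] \<open>1 \<le> t\<close> by simp
qed

theorem theorem1p6:
  fixes V :: "'a set" and E :: "'a set multiset" and n t :: nat
  assumes "hypergraph V E"
    and "card V = n"
    and "intersecting E"
    and "codegree_le E t"
    and "\<forall>e\<in>#E. card e \<noteq> 1"
  shows "size E \<le> t * Max ((\<lambda>v. card (closed_nbhd E v)) ` V)
    \<and> ((size E = t * Max ((\<lambda>v. card (closed_nbhd E v)) ` V) \<and> E \<noteq> {#}) \<longrightarrow>
       (\<exists>v\<in>V. size E = t * card (closed_nbhd E v)
          \<and> (\<forall>x\<in>V - closed_nbhd E v. degree E x = 0)
          \<and> ((\<exists>k P. projective_plane (closed_nbhd E v) P k
                  \<and> induced E (closed_nbhd E v) = t_fold t P)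
             \<or> (\<exists>P. near_pencil (closed_nbhd E v) P (card (closed_nbhd E v))
                  \<and> induced E (closed_nbhd E v) = t_fold t P))))"
proof (cases "E = {#}")
  case False
  interpret intersecting_hypergraph V E t
    using intersecting_hypergraphI assms(1,3-5) .
  show ?thesis
  proof (cases "\<exists>z\<in>V. degree E z = size E")
    case True
    then show ?thesis
      using size_less_if_degree_eq_size \<open>E \<noteq> {#}\<close> by fastforce
  next
    case False
    then obtain x where "max_degree_vertex V E t x"
      using obtain_max_degree_vertex \<open>E \<noteq> {#}\<close> by blast
    then interpret max_degree_vertex V E t x .
    show ?thesis
      using size_le_max extremal_configuration.extremal_structure[OF extremal_configurationI]
      by blast
  qed
qed simp

end
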